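(* Let $S$ be a $C^1$-differentiable semigroup in which idempotents commute pairwise. Then the set $E(S)$ of idempotents is discrete in the subspace topology.
   Context: A $C^1$-differentiable semigroup is a topological semigroup $S$ which is a $C^1$ manifold modelled on a Banach space and whose multiplication $S\times S\to S$ is of class $C^1$. $E(S)=\{e: e^2=e\}$. For an idempotent $f$, $G_f$ denotes the maximal subgroup of $S$ containing $f$ (the largest subgroup of $S$ with identity $f$); distinct idempotents have disjoint maximal subgroups. Known fact (Holmes) that may be used: for every $e\in E(S)$ there is an open neighbourhood $U_e$ of $e$ such that $fxf\in G_f$ for all $f\in E(S)\cap U_e$ and all $x\in U_e$. *)

theory Defs
  imports "HOL-Analysis.Analysis"
begin

definition C1_on :: "'b::real_normed_vector set \<Rightarrow> ('b \<Rightarrow> 'c::real_normed_vector) \<Rightarrow> bool" where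
  "C1_on U f \<longleftrightarrow> open U \<and>
     (\<exists>f' :: 'b \<Rightarrow> ('b \<Rightarrow>\<^sub>L 'c).
        (\<forall>x\<in>U. (f has_derivative blinfun_apply (f' x)) (at x)) \<and> continuous_on U f')"

definition is_chart :: "'a::topological_space set \<times> ('a \<Rightarrow> 'b::real_normed_vector) \<Rightarrow> bool" where
  "is_chart c \<longleftrightarrow> (case c of (U, \<phi>) \<Rightarrow>
     open U \<and> open (\<phi> ` U) \<and> inj_on \<phi> U \<and> continuous_on U \<phi> \<and>
     continuous_on (\<phi> ` U) (inv_into U \<phi>))"

definition C1_atlas :: "('a::topological_space set \<times> ('a \<Rightarrow> 'b::banach)) set \<Rightarrow> bool" where
  "C1_atlas A \<longleftrightarrow>
     (\<forall>c\<in>A. is_chart c) \<and> (\<Union>c\<in>A. fst c) = UNIV \<and>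
     (\<forall>(U, \<phi>)\<in>A. \<forall>(V, \<psi>)\<in>A. C1_on (\<phi> ` (U \<inter> V)) (\<psi> \<circ> inv_into U \<phi>))"

definition C1_semigroup :: "('a::{topological_space, semigroup_mult} set \<times> ('a \<Rightarrow> 'b::banach)) set \<Rightarrow> bool" where
  "C1_semigroup A \<longleftrightarrow>
     C1_atlas A \<and>
     continuous_on UNIV (\<lambda>p::'a \<times> 'a. fst p * snd p) \<and>
     (\<forall>(U1, \<phi>1)\<in>A. \<forall>(U2, \<phi>2)\<in>A. \<forall>(V, \<psi>)\<in>A.
        C1_on {p \<in> (\<phi>1 ` U1) \<times> (\<phi>2 ` U2). inv_into U1 \<phi>1 (fst p) * inv_into U2 \<phi>2 (snd p) \<in> V}
              (\<lambda>p. \<psi> (inv_into U1 \<phi>1 (fst p) * inv_into U2 \<phi>2 (snd p))))"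

definition idempotents :: "'a::semigroup_mult set" where
  "idempotents = {e. e * e = e}"

end

theory Submission imports Defs begin

text \<open>In a chart around an idempotent \<open>e\<close>, with \<open>a = \<phi> e\<close> and \<open>b = \<phi> f\<close>, the multiplication
  becomes a \<open>C\<^sup>1\<close> map \<open>M\<close> with \<open>M (a, a) = a\<close>. Its second difference
  \<open>M (b, b) - M (a, b) - M (b, a) + M (a, a)\<close> is \<open>o(|b - a|)\<close>, because the derivative of \<open>M\<close> is
  continuous. If \<open>f\<close> is an idempotent comparable with \<open>e\<close> in the natural order, the four values
  are \<open>a\<close> and \<open>b\<close> only, and the second difference is \<open>\<plusminus>(b - a)\<close>; hence \<open>f = e\<close> once \<open>f\<close> is
  close to \<open>e\<close>. For an arbitrary idempotent \<open>f\<close> near \<open>e\<close>, commutativity makes \<open>e f\<close> an idempotent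
  below \<open>e\<close> and still near \<open>e\<close>, so \<open>e f = e\<close>; then \<open>e \<le> f\<close> and \<open>f = e\<close>.\<close>

definition idem_le :: "'a::semigroup_mult \<Rightarrow> 'a \<Rightarrow> bool" where
  "idem_le f e \<longleftrightarrow> e * f = f \<and> f * e = f"

lemma Pair_mem_ball_diag:
  fixes a x y :: "'a::metric_space"
  assumes "dist a x < r" "dist a y < r"
  shows "(x, y) \<in> ball (a, a) (2 * r)"
proof -
  have "dist (a, a) (x, y) \<le> dist a x + dist a y"
    unfolding dist_Pair_Pair using sqrt_sum_squares_le_sum_abs[of "dist a x" "dist a y"] by simp
  then show ?thesis using assms by simp
qed

lemma second_difference_bound:
  fixes M :: "'a::real_normed_vector \<times> 'a \<Rightarrow> 'c::real_normed_vector"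
  assumes der: "\<And>p. p \<in> ball (a, a) (2 * r) \<Longrightarrow> (M has_derivative blinfun_apply (M' p)) (at p)"
    and close: "\<And>p. p \<in> ball (a, a) (2 * r) \<Longrightarrow> norm (M' p - M' (a, a)) \<le> \<epsilon>"
    and b: "dist a b < r"
  shows "norm (M (b, b) - M (a, b) - M (b, a) + M (a, a)) \<le> 2 * \<epsilon> * norm (b - a)"
proof -
  define H where "H x = M (x, b) - M (x, a)" for x
  define H' where "H' x = blinfun_apply (M' (x, b) - M' (x, a)) \<circ> (\<lambda>h. (h, 0))" for x
  have "r > 0" using b zero_le_dist[of a b] by linarith
  then have pairs: "(x, b) \<in> ball (a, a) (2 * r)" "(x, a) \<in> ball (a, a) (2 * r)"
    if "x \<in> ball a r" for x
    using that b Pair_mem_ball_diag[of a x r] \<open>r > 0\<close> by auto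
  have "(H has_derivative H' x) (at x within ball a r)" if "x \<in> ball a r" for x
  proof -
    have "((\<lambda>x. (x, y)) has_derivative (\<lambda>h. (h, 0))) (at x)" for y :: 'a
      by (auto intro!: derivative_eq_intros)
    from has_derivative_compose[OF this der] pairs[OF that]
    have "((\<lambda>x. M (x, b)) has_derivative blinfun_apply (M' (x, b)) \<circ> (\<lambda>h. (h, 0))) (at x)"
      "((\<lambda>x. M (x, a)) has_derivative blinfun_apply (M' (x, a)) \<circ> (\<lambda>h. (h, 0))) (at x)"
      by (auto simp: o_def)
    from has_derivative_diff[OF this] show ?thesis
      unfolding H_def[abs_def] H'_def by (auto simp: o_def blinfun.diff_left intro: has_derivative_at_withinI)
  qed
  moreover have "onorm (H' x) \<le> 2 * \<epsilon>" if "x \<in> ball a r" for x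
  proof (rule onorm_bound)
    show "0 \<le> 2 * \<epsilon>" using close[of "(a, a)"] \<open>r > 0\<close> by simp
    fix h
    have "norm (H' x h) \<le> norm (M' (x, b) - M' (x, a)) * norm (h, 0::'a)"
      unfolding H'_def o_def by (rule norm_blinfun)
    also have "norm (M' (x, b) - M' (x, a)) \<le> norm (M' (x, b) - M' (a, a)) + norm (M' (x, a) - M' (a, a))"
      by (metis norm_diff_triangle_le norm_minus_commute order_refl)
    also have "\<dots> \<le> 2 * \<epsilon>" using close[OF pairs(1)[OF that]] close[OF pairs(2)[OF that]] by simp
    finally show "norm (H' x h) \<le> 2 * \<epsilon> * norm h"
      by (simp add: norm_Pair mult_right_mono)
  qed
  ultimately have "norm (H b - H a) \<le> 2 * \<epsilon> * norm (b - a)"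
    using \<open>r > 0\<close> b by (intro differentiable_bound[OF convex_ball]) auto
  then show ?thesis unfolding H_def by (simp add: algebra_simps)
qed

lemma C1_on_second_difference_small:
  fixes M :: "'a::real_normed_vector \<times> 'a \<Rightarrow> 'c::real_normed_vector"
  assumes "C1_on D M" "(a, a) \<in> D" "\<epsilon> > 0"
  shows "\<exists>r>0. \<forall>b. dist a b < r \<longrightarrow>
           norm (M (b, b) - M (a, b) - M (b, a) + M (a, a)) \<le> \<epsilon> * norm (b - a)"
proof -
  obtain M' :: "'a \<times> 'a \<Rightarrow> ('a \<times> 'a) \<Rightarrow>\<^sub>L 'c" where "open D"
    and der: "\<And>p. p \<in> D \<Longrightarrow> (M has_derivative blinfun_apply (M' p)) (at p)"
    and "continuous_on D M'"
    using assms(1) unfolding C1_on_def by blast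
  obtain d1 where "d1 > 0"
    and d1: "\<And>p. p \<in> D \<Longrightarrow> dist p (a, a) < d1 \<Longrightarrow> dist (M' p) (M' (a, a)) < \<epsilon> / 2"
    using \<open>continuous_on D M'\<close> assms(2,3) unfolding continuous_on_iff by (meson half_gt_zero)
  obtain d2 where "d2 > 0" and d2: "ball (a, a) d2 \<subseteq> D"
    using \<open>open D\<close> assms(2) open_contains_ball by blast
  define r where "r = min d1 d2 / 2"
  have ball_D: "ball (a, a) (2 * r) \<subseteq> D"
    using d2 unfolding r_def by auto
  have "norm (M' p - M' (a, a)) \<le> \<epsilon> / 2" if "p \<in> ball (a, a) (2 * r)" for p
  proof -
    have "p \<in> D" using ball_D that by blast
    moreover have "dist p (a, a) < d1" using that unfolding r_def by (auto simp: dist_commute)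
    ultimately show ?thesis using d1 by (simp add: dist_norm less_imp_le)
  qed
  then have "norm (M (b, b) - M (a, b) - M (b, a) + M (a, a)) \<le> \<epsilon> * norm (b - a)"
    if "dist a b < r" for b
    using second_difference_bound[of a r M M' "\<epsilon> / 2" b] der ball_D that by (simp add: subset_eq)
  moreover have "r > 0" using \<open>d1 > 0\<close> \<open>d2 > 0\<close> by (simp add: r_def)
  ultimately show ?thesis by blast
qed

lemma comparable_idempotents_second_difference:
  fixes \<phi> :: "'a::semigroup_mult \<Rightarrow> 'b::real_normed_vector"
  assumes "e * e = e" "f * f = f" "idem_le f e \<or> idem_le e f"
  shows "norm (\<phi> (f * f) - \<phi> (e * f) - \<phi> (f * e) + \<phi> (e * e)) = norm (\<phi> f - \<phi> e)"
  using assms by (auto simp: idem_le_def norm_minus_commute)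

lemma comparable_idempotents_isolated:
  fixes A :: "('a::{topological_space, semigroup_mult} set \<times> ('a \<Rightarrow> 'b::banach)) set"
  assumes "C1_semigroup A"
    and "(e::'a) \<in> idempotents"
  shows "\<exists>W. open W \<and> e \<in> W \<and> (\<forall>f \<in> W \<inter> idempotents. idem_le f e \<or> idem_le e f \<longrightarrow> f = e)"
proof -
  have "C1_atlas A" using assms(1) unfolding C1_semigroup_def by blast
  then obtain U \<phi> where chart: "(U, \<phi>) \<in> A" and "e \<in> U"
    unfolding C1_atlas_def by (metis UN_iff UNIV_I prod.collapse)
  then have "is_chart (U, \<phi>)" using \<open>C1_atlas A\<close> unfolding C1_atlas_def by blast
  then have "open U" and "inj_on \<phi> U" and "continuous_on U \<phi>"
    unfolding is_chart_def by auto
  define \<psi> where "\<psi> = inv_into U \<phi>"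
  have \<psi>_\<phi>: "\<psi> (\<phi> x) = x" if "x \<in> U" for x
    using \<open>inj_on \<phi> U\<close> that by (simp add: \<psi>_def)
  define D where "D = {p \<in> \<phi> ` U \<times> \<phi> ` U. \<psi> (fst p) * \<psi> (snd p) \<in> U}"
  define M where "M p = \<phi> (\<psi> (fst p) * \<psi> (snd p))" for p
  have "C1_on D M"
    using assms(1) chart unfolding C1_semigroup_def D_def M_def \<psi>_def by fast
  define a where "a = \<phi> e"
  have "e * e = e" using assms(2) by (simp add: idempotents_def)
  then have "(a, a) \<in> D" unfolding D_def a_def using \<open>e \<in> U\<close> \<psi>_\<phi> by auto
  then obtain r where "r > 0" and small: "\<And>b. dist a b < r \<Longrightarrow>
      norm (M (b, b) - M (a, b) - M (b, a) + M (a, a)) \<le> 1/2 * norm (b - a)"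
    using C1_on_second_difference_small[OF \<open>C1_on D M\<close> \<open>(a, a) \<in> D\<close>, of "1/2"] by auto
  define W where "W = U \<inter> \<phi> -` ball a r"
  have "f = e" if "f \<in> W" "f * f = f" "idem_le f e \<or> idem_le e f" for f
  proof -
    have "f \<in> U" "dist a (\<phi> f) < r" using that(1) by (auto simp: W_def)
    have M_chart: "M (x, y) = \<phi> (x' * y')" if "x = \<phi> x'" "y = \<phi> y'" "x' \<in> U" "y' \<in> U" for x y x' y'
      using that \<psi>_\<phi> by (simp add: M_def)
    have "norm (\<phi> f - a) = norm (M (\<phi> f, \<phi> f) - M (a, \<phi> f) - M (\<phi> f, a) + M (a, a))"
      using M_chart comparable_idempotents_second_difference[OF \<open>e * e = e\<close> that(2,3), of \<phi>]
        \<open>f \<in> U\<close> \<open>e \<in> U\<close> by (simp add: a_def)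
    also have "\<dots> \<le> 1/2 * norm (\<phi> f - a)" using small[OF \<open>dist a (\<phi> f) < r\<close>] .
    finally have "\<phi> f = \<phi> e" by (simp add: a_def)
    then show "f = e" using \<open>inj_on \<phi> U\<close> \<open>f \<in> U\<close> \<open>e \<in> U\<close> by (meson inj_onD)
  qed
  moreover have "open W"
    using \<open>continuous_on U \<phi>\<close> \<open>open U\<close> unfolding W_def by (simp add: continuous_open_preimage)
  moreover have "e \<in> W" using \<open>e \<in> U\<close> \<open>r > 0\<close> by (simp add: W_def a_def)
  ultimately show ?thesis by (auto simp: idempotents_def)
qed

lemma isolated_in_idempotentsI:
  fixes e :: "'a::{topological_space, semigroup_mult}"
  assumes "e \<in> idempotents" and "\<forall>f\<in>idempotents. e * f = f * e"
    and "continuous_on UNIV (\<lambda>x. e * x)"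
    and "open W" "e \<in> W" "\<forall>f \<in> W \<inter> idempotents. idem_le f e \<or> idem_le e f \<longrightarrow> f = e"
  shows "e isolated_in idempotents"
proof (rule isolated_inI)
  let ?V = "W \<inter> (\<lambda>x. e * x) -` W"
  have "e * e = e" using assms(1) by (simp add: idempotents_def)
  show "open ?V" using assms(3,4) by (intro open_Int open_vimage)
  have "f = e" if "f \<in> ?V" "f \<in> idempotents" for f
  proof -
    have "f * f = f" "e * f = f * e" using that(2) assms(2) by (auto simp: idempotents_def)
    then have "(e * f) * (e * f) = e * f" "e * (e * f) = e * f" "(e * f) * e = e * f"
      using \<open>e * e = e\<close> by (metis mult.assoc)+
    then have "e * f \<in> idempotents" "idem_le (e * f) e"
      by (simp_all add: idempotents_def idem_le_def)
    then have "e * f = e" using assms(6) that(1) by blast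
    then have "idem_le e f" using \<open>e * f = f * e\<close> by (simp add: idem_le_def)
    then show "f = e" using assms(6) that by blast
  qed
  then show "?V \<inter> idempotents = {e}" using assms(1,5) \<open>e * e = e\<close> by auto
qed (use assms(1) in auto)

theorem corollary6p3:
  fixes A :: "('a::{topological_space, semigroup_mult} set \<times> ('a \<Rightarrow> 'b::banach)) set"
  assumes "C1_semigroup A"
    and "\<forall>e\<in>idempotents. \<forall>f\<in>idempotents. e * f = f * (e::'a)"
  shows "discrete (idempotents :: 'a set)"
proof (rule discreteI)
  fix e :: 'a
  assume "e \<in> idempotents"
  obtain W where "open W" "e \<in> W" "\<forall>f \<in> W \<inter> idempotents. idem_le f e \<or> idem_le e f \<longrightarrow> f = e"
    using comparable_idempotents_isolated[OF assms(1) \<open>e \<in> idempotents\<close>] by blast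
  moreover have "continuous_on UNIV (\<lambda>x::'a. e * x)"
  proof -
    have "continuous_on UNIV (\<lambda>p::'a \<times> 'a. fst p * snd p)"
      using assms(1) unfolding C1_semigroup_def by blast
    then have "continuous_on UNIV (\<lambda>x::'a. fst (e, x) * snd (e, x))"
      by (rule continuous_on_compose2) (auto intro!: continuous_intros)
    then show ?thesis by simp
  qed
  ultimately show "e isolated_in idempotents"
    using isolated_in_idempotentsI \<open>e \<in> idempotents\<close> assms(2) by blast
qed

end
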